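(* Consider the algorithm described in the context (with parameters $p\in[0,1]$, $l\in\mathbb{N}$) run on a stream consistent with a representation of size $m$ with at most $k$ exceptions, in which each component has a unique label. Let $t$ be some iteration of the run, let $C[x]$ be some valid rule that exists during this iteration, and let $U(x)$ be the value of its update counter at the end of this iteration. Then the number of exceptions that caused updates to this rule until the end of iteration $t$ is at least $(U(x)-(m-1))/2$.
   Context: Setting. $\mathcal{X}$ is a domain, $\mathcal{Y}$ a finite label set, $\Phi$ a set of binary features on $\mathcal{X}$ closed under negation. A representation of size $m$ is a cover $\mathcal{G}=\{G_1,\dots,G_m\}$ of $\mathcal{X}$ by components with labels $\ell(G)$; each $x$ has a fixed component $G(x)\ni x$; $c^*(x)=\ell(G(x))$; for components $G_i,G_j$ with different labels there is $\phi(G_i,G_j)\in\Phi$ true on all of $G_i$ and false on all of $G_j$, with $\phi(G_j,G_i)=\neg\phi(G_i,G_j)$. Protocol: the learner first gets $x_0$ with label $y_0$; then each example $x_t$ arrives, the learner predicts a label with an explanation example previously seen with that label; on a mistake the teacher gives $y_t=c^*(x_t)$ and a feature $\phi(G(x_t),G(\hat x_t))$, $\hat x_t$ the explanation. An exception is an example on which the feedback is inconsistent with the representation/protocol; at most $k$ examples are exceptions. Non-exception examples are valid; a rule $C[x]$ is valid if $x$ is valid. Algorithm (parameters $p,l$; also uses $m$): receives $(x_0,y_0)$; maintains a list $L$ of rules, each indexed by a representative $x$, with a conjunction $C[x]$ of features, a label $\texttt{label}[x]$, and an update counter $U(x)$. On $x_t$: (a) If some $C[\hat x]\in L$ is satisfied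 by $x_t$, predict $\texttt{label}[\hat x]$ with explanation $\hat x$; if incorrect, receive $y_t$ and feature $\phi_t$; if $\hat x$ satisfies $\neg\phi_t$ and $x_t$ satisfies $\phi_t$, add $\neg\phi_t$ to $C[\hat x]$ (otherwise the conjunction is unchanged); in either case set $U(\hat x)\leftarrow U(\hat x)+1$ and delete the rule if $U(\hat x)\ge m+l-1$. (b) Otherwise, predict $y_0$ with explanation $x_0$; if incorrect, receive $y_t$ and $\phi$; if no rule in $L$ has label $y_t$, draw an independent bit $B$ with success probability $p$ and, if $B=1$, add a new rule with empty conjunction $C[x_t]$, $\texttt{label}[x_t]=y_t$, $U(x_t)=0$; else let $C[\hat x]$ be the rule in $L$ with label $y_t$, remove from $C[\hat x]$ some feature not satisfied by $x_t$, set $U(\hat x)\leftarrow U(\hat x)+1$, and delete the rule if $U(\hat x)\ge m+l-1$. An example "causes an update" to a rule if processing it increments that rule's counter $U$. *)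

theory Defs
  imports Complex_Main
begin

text \<open>Representation of size m: components G 0 .. G (m-1) with labels lab i,
  each point x has its fixed component gcomp x (with x in G (gcomp x)),
  separating features sep i j for components with different labels.\<close>

definition is_rep ::
  "('x \<Rightarrow> bool) set \<Rightarrow> nat \<Rightarrow> (nat \<Rightarrow> 'x set) \<Rightarrow> (nat \<Rightarrow> 'y) \<Rightarrow> ('x \<Rightarrow> nat)
   \<Rightarrow> (nat \<Rightarrow> nat \<Rightarrow> ('x \<Rightarrow> bool)) \<Rightarrow> bool" where
  "is_rep \<Phi> m G lab gcomp sep \<longleftrightarrow>
     (\<forall>\<phi>\<in>\<Phi>. (\<lambda>x. \<not> \<phi> x) \<in> \<Phi>) \<and>
     (\<forall>x. gcomp x < m \<and> x \<in> G (gcomp x)) \<and>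
     (\<forall>i<m. \<forall>j<m. lab i \<noteq> lab j \<longrightarrow>
        sep i j \<in> \<Phi> \<and> (\<forall>x\<in>G i. sep i j x) \<and> (\<forall>x\<in>G j. \<not> sep i j x) \<and>
        sep j i = (\<lambda>x. \<not> sep i j x))"

text \<open>State of the learner. Rules are indexed by the stream time of their
  representative example. The counter of a rule is kept after deletion.\<close>

record ('x, 'y) lstate =
  active :: "nat set"
  conj :: "nat \<Rightarrow> ('x \<Rightarrow> bool) set"
  rlab :: "nat \<Rightarrow> 'y"
  cnt :: "nat \<Rightarrow> nat"

definition sat :: "('x \<Rightarrow> bool) set \<Rightarrow> 'x \<Rightarrow> bool" where
  "sat C x \<longleftrightarrow> (\<forall>f\<in>C. f x)"

definition bump :: "nat \<Rightarrow> nat \<Rightarrow> nat \<Rightarrow> ('x, 'y) lstate \<Rightarrow> ('x, 'y) lstate" where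
  "bump m l s S = S\<lparr>cnt := (cnt S)(s := Suc (cnt S s)),
     active := (if Suc (cnt S s) \<ge> m + l - 1 then active S - {s} else active S)\<rparr>"

text \<open>One iteration t \<ge> 1. The example is xs t, the teacher's label ys t and
  feature phis t (only used when ys t differs from the prediction, i.e. on a mistake),
  B t is the realisation of the coin, e is the explanation chosen:
  Some s = rule with representative xs s (case (a)), None = default x_0 (case (b)).\<close>

definition step ::
  "nat \<Rightarrow> nat \<Rightarrow> (nat \<Rightarrow> 'x) \<Rightarrow> (nat \<Rightarrow> 'y) \<Rightarrow> (nat \<Rightarrow> 'x \<Rightarrow> bool) \<Rightarrow> (nat \<Rightarrow> bool)
   \<Rightarrow> nat \<Rightarrow> nat option \<Rightarrow> ('x, 'y) lstate \<Rightarrow> ('x, 'y) lstate \<Rightarrow> bool" where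
  "step m l xs ys phis B t e S S' \<longleftrightarrow>
    (case e of
      Some s \<Rightarrow> s \<in> active S \<and> sat (conj S s) (xs t) \<and>
        (if ys t = rlab S s then S' = S
         else S' = bump m l s (S\<lparr>conj := (conj S)(s :=
                (if \<not> phis t (xs s) \<and> phis t (xs t)
                 then insert (\<lambda>z. \<not> phis t z) (conj S s) else conj S s))\<rparr>))
    | None \<Rightarrow> (\<forall>s\<in>active S. \<not> sat (conj S s) (xs t)) \<and>
        (if ys t = ys 0 then S' = S
         else if (\<forall>s\<in>active S. rlab S s \<noteq> ys t) then
           S' = (if B t then S\<lparr>active := insert t (active S), conj := (conj S)(t := {}),
                               rlab := (rlab S)(t := ys t), cnt := (cnt S)(t := 0)\<rparr>
                 else S)
         else (\<exists>s\<in>active S. rlab S s = ys t \<and>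
                 (\<exists>f\<in>conj S s. \<not> f (xs t) \<and>
                    S' = bump m l s (S\<lparr>conj := (conj S)(s := conj S s - {f})\<rparr>)))))"

text \<open>A run: st 0 is the state after receiving (x_0, y_0); st t the state after iteration t.\<close>

definition alg_run ::
  "nat \<Rightarrow> nat \<Rightarrow> (nat \<Rightarrow> 'x) \<Rightarrow> (nat \<Rightarrow> 'y) \<Rightarrow> (nat \<Rightarrow> 'x \<Rightarrow> bool) \<Rightarrow> (nat \<Rightarrow> bool)
   \<Rightarrow> (nat \<Rightarrow> nat option) \<Rightarrow> (nat \<Rightarrow> ('x, 'y) lstate) \<Rightarrow> bool" where
  "alg_run m l xs ys phis B expl st \<longleftrightarrow>
     active (st 0) = {} \<and> (\<forall>s. cnt (st 0) s = 0) \<and>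
     (\<forall>t\<ge>1. step m l xs ys phis B t (expl t) (st (t - 1)) (st t))"

definition pred_lab :: "(nat \<Rightarrow> 'y) \<Rightarrow> (nat \<Rightarrow> nat option) \<Rightarrow> (nat \<Rightarrow> ('x, 'y) lstate) \<Rightarrow> nat \<Rightarrow> 'y" where
  "pred_lab ys expl st t = (case expl t of None \<Rightarrow> ys 0 | Some s \<Rightarrow> rlab (st (t - 1)) s)"

definition expl_pt :: "(nat \<Rightarrow> 'x) \<Rightarrow> (nat \<Rightarrow> nat option) \<Rightarrow> nat \<Rightarrow> 'x" where
  "expl_pt xs expl t = (case expl t of None \<Rightarrow> xs 0 | Some s \<Rightarrow> xs s)"

definition valid_ex ::
  "(nat \<Rightarrow> 'y) \<Rightarrow> ('x \<Rightarrow> nat) \<Rightarrow> (nat \<Rightarrow> nat \<Rightarrow> ('x \<Rightarrow> bool)) \<Rightarrow> (nat \<Rightarrow> 'x) \<Rightarrow> (nat \<Rightarrow> 'y)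
   \<Rightarrow> (nat \<Rightarrow> 'x \<Rightarrow> bool) \<Rightarrow> (nat \<Rightarrow> nat option) \<Rightarrow> (nat \<Rightarrow> ('x, 'y) lstate) \<Rightarrow> nat \<Rightarrow> bool" where
  "valid_ex lab gcomp sep xs ys phis expl st t \<longleftrightarrow>
     (if t = 0 then ys 0 = lab (gcomp (xs 0))
      else ys t = lab (gcomp (xs t)) \<and>
        (ys t \<noteq> pred_lab ys expl st t \<longrightarrow>
           lab (gcomp (xs t)) \<noteq> lab (gcomp (expl_pt xs expl t)) \<and>
           phis t = sep (gcomp (xs t)) (gcomp (expl_pt xs expl t))))"

end

theory Submission
  imports Defs
begin

text \<open>Let the valid rule \<open>C[x]\<close> have its representative \<open>x\<close> in component \<open>g\<close>, and call the
  features \<open>\<phi>(G\<^sub>g, G\<^sub>j)\<close> with \<open>lab j \<noteq> lab g\<close> good: they hold on all of \<open>G\<^sub>g\<close>, and there are at most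
  \<open>m - 1\<close> of them. The slack \<open>U(x) + #bad(C[x]) - #good(C[x])\<close> is \<open>0\<close> when the rule is created.
  A valid update never increases it: a mistake of \<open>C[x]\<close> adds the teacher's feature, which is
  good and new, and a generalisation of \<open>C[x]\<close> on a valid example of its own label, which lies
  in \<open>G\<^sub>g\<close> by uniqueness of labels, removes a feature false on \<open>G\<^sub>g\<close>, hence a bad one. An
  exceptional update increases it by at most 2. Hence \<open>U(x) \<le> #good(C[x]) + 2 E \<le> m - 1 + 2 E\<close>,
  where \<open>E\<close> counts the exceptional updates.\<close>

lemma step_new_rule:
  assumes "step m l xs ys phis B t e S S'" and "s \<in> active S'" and "s \<notin> active S"
  shows "s = t \<and> conj S' s = {} \<and> cnt S' s = 0 \<and> rlab S' s = ys t"
  using assms unfolding step_def bump_def by (cases e) (auto split: if_splits)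

lemma step_rule_cases:
  assumes "step m l xs ys phis B t e S S'" and "s \<noteq> t"
  obtains (unchanged) "conj S' s = conj S s" "cnt S' s = cnt S s" "rlab S' s = rlab S s"
  | (refined) "e = Some s" "sat (conj S s) (xs t)" "ys t \<noteq> rlab S s"
      "conj S' s = (if \<not> phis t (xs s) \<and> phis t (xs t)
                    then insert (\<lambda>z. \<not> phis t z) (conj S s) else conj S s)"
      "cnt S' s = Suc (cnt S s)" "rlab S' s = rlab S s"
  | (generalised) f where "e = None" "rlab S s = ys t" "f \<in> conj S s" "\<not> f (xs t)"
      "conj S' s = conj S s - {f}" "cnt S' s = Suc (cnt S s)" "rlab S' s = rlab S s"
proof (cases e)
  case None
  show ?thesis
  proof (cases "ys t = ys 0 \<or> (\<forall>s'\<in>active S. rlab S s' \<noteq> ys t)")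
    case True
    then show ?thesis using assms None unchanged by (auto simp: step_def split: if_splits)
  next
    case False
    then obtain s' f where "rlab S s' = ys t" "f \<in> conj S s'" "\<not> f (xs t)"
      "S' = bump m l s' (S\<lparr>conj := (conj S)(s' := conj S s' - {f})\<rparr>)"
      using assms(1) None by (auto simp: step_def split: if_splits)
    then show ?thesis using None generalised unchanged by (cases "s' = s") (auto simp: bump_def)
  qed
next
  case (Some s')
  then show ?thesis using assms refined unchanged unfolding step_def bump_def
    by (cases "s' = s") (auto split: if_splits)
qed

definition card_balance :: "'a set \<Rightarrow> 'a set \<Rightarrow> int" where
  "card_balance A C = int (card (C - A)) - int (card (C \<inter> A))"

lemma card_balance_insert:
  assumes "finite C"
  shows "card_balance A (insert f C) =
           card_balance A C + (if f \<in> C then 0 else if f \<in> A then -1 else 1)"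
  using assms by (cases "f \<in> C") (auto simp: card_balance_def insert_absorb insert_Diff_if Int_insert_left)

lemma card_balance_remove:
  assumes "finite C"
  shows "card_balance A (C - {f}) =
           card_balance A C + (if f \<notin> C then 0 else if f \<in> A then 1 else -1)"
proof -
  have "C - {f} - A = C - A - {f}" and "(C - {f}) \<inter> A = C \<inter> A - {f}" by blast+
  moreover have "f \<in> C - A \<Longrightarrow> Suc (card (C - A - {f})) = card (C - A)"
    and "f \<in> C \<inter> A \<Longrightarrow> Suc (card (C \<inter> A - {f})) = card (C \<inter> A)"
    using assms by (metis card_Suc_Diff1 finite_Diff, metis card_Suc_Diff1 finite_Int)
  ultimately show ?thesis unfolding card_balance_def by force
qed

locale learner_run =
  fixes \<Phi> :: "('x \<Rightarrow> bool) set" and m l :: nat and G :: "nat \<Rightarrow> 'x set"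
    and lab :: "nat \<Rightarrow> 'y" and gcomp :: "'x \<Rightarrow> nat"
    and sep :: "nat \<Rightarrow> nat \<Rightarrow> ('x \<Rightarrow> bool)"
    and xs :: "nat \<Rightarrow> 'x" and ys :: "nat \<Rightarrow> 'y" and phis :: "nat \<Rightarrow> 'x \<Rightarrow> bool"
    and B :: "nat \<Rightarrow> bool" and expl :: "nat \<Rightarrow> nat option"
    and st :: "nat \<Rightarrow> ('x, 'y) lstate"
  assumes rep: "is_rep \<Phi> m G lab gcomp sep"
    and uniq: "inj_on lab {..<m}"
    and run: "alg_run m l xs ys phis B expl st"
begin

abbreviation valid :: "nat \<Rightarrow> bool" where
  "valid \<equiv> valid_ex lab gcomp sep xs ys phis expl st"

lemma gcomp_less: "gcomp x < m"
  and in_gcomp: "x \<in> G (gcomp x)"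
  using rep by (auto simp: is_rep_def)

lemma sep_true: "i < m \<Longrightarrow> j < m \<Longrightarrow> lab i \<noteq> lab j \<Longrightarrow> x \<in> G i \<Longrightarrow> sep i j x"
  and sep_false: "i < m \<Longrightarrow> j < m \<Longrightarrow> lab i \<noteq> lab j \<Longrightarrow> x \<in> G j \<Longrightarrow> \<not> sep i j x"
  and sep_swap: "i < m \<Longrightarrow> j < m \<Longrightarrow> lab i \<noteq> lab j \<Longrightarrow> sep j i = (\<lambda>x. \<not> sep i j x)"
  using rep unfolding is_rep_def by blast+

lemma run_step: "step m l xs ys phis B (Suc i) (expl (Suc i)) (st i) (st (Suc i))"
  using run unfolding alg_run_def by (metis diff_Suc_1 le_add1 plus_1_eq_Suc)

lemma valid_label: "valid t \<Longrightarrow> ys t = lab (gcomp (xs t))"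
  by (simp add: valid_ex_def split: if_splits)

definition good_features :: "nat \<Rightarrow> ('x \<Rightarrow> bool) set" where
  "good_features g = sep g ` {j. j < m \<and> lab j \<noteq> lab g}"

lemma card_good_features:
  assumes "g < m"
  shows "card (good_features g) \<le> m - 1"
proof -
  have "card (good_features g) \<le> card {j. j < m \<and> lab j \<noteq> lab g}"
    unfolding good_features_def by (rule card_image_le) simp
  also have "\<dots> \<le> card ({..<m} - {g})" by (rule card_mono) auto
  also have "\<dots> = m - 1" using assms by simp
  finally show ?thesis .
qed

lemma good_features_hold:
  assumes "g < m" and "f \<in> good_features g" and "x \<in> G g"
  shows "f x"
  using assms sep_true unfolding good_features_def by auto

lemma not_sep_good:
  assumes "j < m" and "g < m" and "lab j \<noteq> lab g"
  shows "(\<lambda>z. \<not> sep j g z) \<in> good_features g"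
proof -
  have "(\<lambda>z. \<not> sep j g z) = sep g j" using sep_swap[of g j] assms by auto
  then show ?thesis using assms unfolding good_features_def by auto
qed

lemma active_since_creation: "s \<in> active (st i) \<Longrightarrow> 1 \<le> s \<and> s \<le> i \<and> s \<in> active (st s)"
proof (induction i)
  case 0
  then show ?case using run by (simp add: alg_run_def)
next
  case (Suc i)
  show ?case
  proof (cases "s \<in> active (st i)")
    case True
    then show ?thesis using Suc.IH by auto
  next
    case False
    then have "s = Suc i" using step_new_rule[OF run_step Suc.prems] by blast
    then show ?thesis using Suc.prems by simp
  qed
qed

lemma rule_at_creation:
  assumes "s \<in> active (st s)"
  shows "conj (st s) s = {} \<and> cnt (st s) s = 0 \<and> rlab (st s) s = ys s"
proof -
  obtain i where i: "s = Suc i" using active_since_creation[OF assms] by (cases s) auto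
  have "s \<notin> active (st i)" using active_since_creation[of s i] i by auto
  then show ?thesis using step_new_rule[OF run_step[of i]] assms i by simp
qed

lemma refinement_adds_good_feature:
  assumes "expl (Suc i) = Some s" and "sat (conj (st i) s) (xs (Suc i))"
    and "ys (Suc i) \<noteq> rlab (st i) s" and "valid (Suc i)"
  shows "\<not> phis (Suc i) (xs s) \<and> phis (Suc i) (xs (Suc i))"
    and "(\<lambda>z. \<not> phis (Suc i) z) \<in> good_features (gcomp (xs s)) - conj (st i) s"
proof -
  define g j where "g = gcomp (xs s)" and "j = gcomp (xs (Suc i))"
  have "pred_lab ys expl st (Suc i) = rlab (st i) s" and "expl_pt xs expl (Suc i) = xs s"
    using assms(1) by (simp_all add: pred_lab_def expl_pt_def)
  then have labs: "lab j \<noteq> lab g" and feature: "phis (Suc i) = sep j g"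
    using assms(3,4) unfolding valid_ex_def g_def j_def by simp_all
  show separates: "\<not> phis (Suc i) (xs s) \<and> phis (Suc i) (xs (Suc i))"
    using sep_true[OF _ _ labs] sep_false[OF _ _ labs] gcomp_less in_gcomp feature
    unfolding g_def j_def by simp
  have "(\<lambda>z. \<not> phis (Suc i) z) \<notin> conj (st i) s"
    using assms(2) separates unfolding sat_def by auto
  then show "(\<lambda>z. \<not> phis (Suc i) z) \<in> good_features (gcomp (xs s)) - conj (st i) s"
    using not_sep_good[OF _ _ labs] gcomp_less feature unfolding g_def j_def by simp
qed

lemma generalisation_removes_bad_feature:
  assumes "ys (Suc i) = ys s" and "valid s" and "valid (Suc i)" and "\<not> f (xs (Suc i))"
  shows "f \<notin> good_features (gcomp (xs s))"
proof -
  have "lab (gcomp (xs (Suc i))) = lab (gcomp (xs s))"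
    using valid_label[OF assms(2)] valid_label[OF assms(3)] assms(1) by simp
  then have "gcomp (xs (Suc i)) = gcomp (xs s)"
    using uniq gcomp_less unfolding inj_on_def by blast
  then have "xs (Suc i) \<in> G (gcomp (xs s))" using in_gcomp[of "xs (Suc i)"] by simp
  then show ?thesis using assms(4) good_features_hold gcomp_less by blast
qed

definition slack :: "nat \<Rightarrow> nat \<Rightarrow> int" where
  "slack s i = int (cnt (st i) s) + card_balance (good_features (gcomp (xs s))) (conj (st i) s)"

definition exc_updates :: "nat \<Rightarrow> nat \<Rightarrow> nat set" where
  "exc_updates s i = {j \<in> {1..i}. \<not> valid j \<and> cnt (st j) s = Suc (cnt (st (j - 1)) s)}"

lemma card_exc_updates_Suc:
  "card (exc_updates s (Suc i)) = card (exc_updates s i) +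
     (if \<not> valid (Suc i) \<and> cnt (st (Suc i)) s = Suc (cnt (st i) s) then 1 else 0)"
proof -
  have "exc_updates s (Suc i) = exc_updates s i \<union>
      (if \<not> valid (Suc i) \<and> cnt (st (Suc i)) s = Suc (cnt (st i) s) then {Suc i} else {})"
    unfolding exc_updates_def by (auto simp: le_Suc_eq)
  moreover have "Suc i \<notin> exc_updates s i" by (simp add: exc_updates_def)
  moreover have "finite (exc_updates s i)" by (simp add: exc_updates_def)
  ultimately show ?thesis by simp
qed

lemma slack_step:
  assumes "s \<noteq> Suc i" and "valid s" and "rlab (st i) s = ys s" and "finite (conj (st i) s)"
  shows "finite (conj (st (Suc i)) s) \<and> rlab (st (Suc i)) s = ys s \<and>
    slack s (Suc i) \<le> slack s i +
      (if \<not> valid (Suc i) \<and> cnt (st (Suc i)) s = Suc (cnt (st i) s) then 2 else 0)"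
  using run_step[of i] assms(1)
proof (cases rule: step_rule_cases)
  case unchanged
  then show ?thesis using assms by (simp add: slack_def)
next
  case refined
  show ?thesis
  proof (cases "valid (Suc i)")
    case True
    then show ?thesis
      using refined refinement_adds_good_feature[OF refined(1-3) True] assms
      by (simp add: slack_def card_balance_insert)
  next
    case False
    then show ?thesis using refined assms by (simp add: slack_def card_balance_insert)
  qed
next
  case (generalised f)
  show ?thesis
  proof (cases "valid (Suc i)")
    case True
    then have "f \<notin> good_features (gcomp (xs s))"
      using generalisation_removes_bad_feature[of i s f] assms(2,3) True generalised(2,4) by simp
    then show ?thesis using generalised assms by (simp add: slack_def card_balance_remove)
  next
    case False
    then show ?thesis using generalised assms by (simp add: slack_def card_balance_remove)
  qed
qed

lemma slack_le_exc_updates: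
  assumes "s \<in> active (st s)" and "valid s" and "s \<le> i"
  shows "finite (conj (st i) s) \<and> rlab (st i) s = ys s \<and> slack s i \<le> 2 * int (card (exc_updates s i))"
  using assms(3)
proof (induction rule: dec_induct)
  case base
  then show ?case using rule_at_creation[OF assms(1)] by (simp add: slack_def card_balance_def)
next
  case (step i)
  then have "s \<noteq> Suc i" by simp
  with step.IH assms(2) have "finite (conj (st (Suc i)) s) \<and> rlab (st (Suc i)) s = ys s \<and>
    slack s (Suc i) \<le> slack s i +
      (if \<not> valid (Suc i) \<and> cnt (st (Suc i)) s = Suc (cnt (st i) s) then 2 else 0)"
    using slack_step by blast
  then show ?case using step.IH card_exc_updates_Suc[of s i] by (simp split: if_splits)
qed

lemma cnt_le_exc_updates:
  assumes "s \<in> active (st s)" and "valid s" and "s \<le> i"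
  shows "cnt (st i) s \<le> m - 1 + 2 * card (exc_updates s i)"
proof -
  let ?A = "good_features (gcomp (xs s))" and ?C = "conj (st i) s"
  have "card (?C \<inter> ?A) \<le> card ?A"
    by (rule card_mono) (auto simp: good_features_def)
  also have "\<dots> \<le> m - 1" using card_good_features gcomp_less by blast
  finally show ?thesis
    using slack_le_exc_updates[OF assms] unfolding slack_def card_balance_def by linarith
qed

end

theorem lemma5:
  fixes \<Phi> :: "('x \<Rightarrow> bool) set" and m l k :: nat and G :: "nat \<Rightarrow> 'x set"
    and lab :: "nat \<Rightarrow> 'y::finite" and gcomp :: "'x \<Rightarrow> nat"
    and sep :: "nat \<Rightarrow> nat \<Rightarrow> ('x \<Rightarrow> bool)"
    and xs :: "nat \<Rightarrow> 'x" and ys :: "nat \<Rightarrow> 'y" and phis :: "nat \<Rightarrow> 'x \<Rightarrow> bool"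
    and B :: "nat \<Rightarrow> bool" and expl :: "nat \<Rightarrow> nat option"
    and st :: "nat \<Rightarrow> ('x, 'y) lstate" and t s :: nat
  assumes rep: "is_rep \<Phi> m G lab gcomp sep"
    and uniq: "inj_on lab {..<m}"
    and run: "alg_run m l xs ys phis B expl st"
    and fin_exc: "finite {i. \<not> valid_ex lab gcomp sep xs ys phis expl st i}"
    and k_exc: "card {i. \<not> valid_ex lab gcomp sep xs ys phis expl st i} \<le> k"
    and t1: "1 \<le> t"
    and exists: "s \<in> active (st (t - 1)) \<or> s \<in> active (st t)"
    and valid: "valid_ex lab gcomp sep xs ys phis expl st s"
  shows "(real (cnt (st t) s) - (real m - 1)) / 2
           \<le> real (card {i \<in> {1..t}. \<not> valid_ex lab gcomp sep xs ys phis expl st i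
                                    \<and> cnt (st i) s = Suc (cnt (st (i - 1)) s)})"
proof -
  interpret learner_run \<Phi> m l G lab gcomp sep xs ys phis B expl st
    using rep uniq run by unfold_locales
  obtain i where "s \<in> active (st i)" and "i \<le> t"
    using exists by (meson diff_le_self order_refl)
  then have "s \<in> active (st s)" and "s \<le> t"
    using active_since_creation by (meson le_trans)+
  then have "cnt (st t) s \<le> m - 1 + 2 * card (exc_updates s t)"
    using cnt_le_exc_updates valid by blast
  moreover have "0 < m" using gcomp_less[of "xs 0"] by linarith
  ultimately have "real (cnt (st t) s) \<le> real m - 1 + 2 * real (card (exc_updates s t))"
    by linarith
  then show ?thesis unfolding exc_updates_def by simp
qed

end
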